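(* For $j=1,2,3,4$ let $\mathcal{S}_j\subset\partial H^2_\mathbb{C}$ be the spinal sphere of $\gamma_j$. Then, for $k\in\mathbb{Z}$: $\mathcal{S}_1\cap G_1^k\mathcal{S}_1\neq\emptyset$ only if $-2\le k\le2$; $\mathcal{S}_1\cap G_1^k\mathcal{S}_2\neq\emptyset$ only if $-4\le k\le1$; $\mathcal{S}_1\cap G_1^k\mathcal{S}_3\neq\emptyset$ only if $-3\le k\le1$; $\mathcal{S}_1\cap G_1^k\mathcal{S}_4\neq\emptyset$ only if $-4\le k\le0$; $\mathcal{S}_2\cap G_1^k\mathcal{S}_2\neq\emptyset$ only if $-2\le k\le2$; $\mathcal{S}_2\cap G_1^k\mathcal{S}_3\neq\emptyset$ only if $-2\le k\le2$; $\mathcal{S}_2\cap G_1^k\mathcal{S}_4\neq\emptyset$ only if $-2\le k\le2$; $\mathcal{S}_3\cap G_1^k\mathcal{S}_3\neq\emptyset$ only if $-2\le k\le2$; $\mathcal{S}_3\cap G_1^k\mathcal{S}_4\neq\emptyset$ only if $-2\le k\le1$; $\mathcal{S}_4\cap G_1^k\mathcal{S}_4\neq\emptyset$ only if $-2\le k\le2$.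
   Context: Hermitian form on $\mathbb{C}^3$: $\langle V,W\rangle=V_1\overline{W_3}+V_2\overline{W_2}+V_3\overline{W_1}$; $\partial H^2_\mathbb{C}$ is the set of null complex lines. Let $$G_1=\begin{pmatrix}1&1&-\frac{1+i\sqrt7}{2}\\0&1&-1\\0&0&1\end{pmatrix},\quad G_3=\begin{pmatrix}1&0&0\\-1&1&0\\ \frac{-1+i\sqrt7}{2}&1&1\end{pmatrix},\quad G_2=G_3G_1^{-1}G_3^{-1}G_1,$$ $Q=(1,0,0)^T$, and $\gamma_1=G_2,\gamma_2=G_2^{-1},\gamma_3=G_3,\gamma_4=G_3^{-1}$. The spinal sphere of a matrix $G$ (with $GQ$ not proportional to $Q$) is $\{[Z]\in\partial H^2_\mathbb{C}: |\langle Z,Q\rangle|=|\langle Z,GQ\rangle|\}$, the boundary at infinity of the bisector $|\langle Z,Q\rangle|=|\langle Z,GQ\rangle|$. $G_1^k\mathcal{S}_j$ denotes the image of $\mathcal{S}_j$ under $G_1^k$. *)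

theory Defs
  imports "HOL-Analysis.Analysis"
begin

text \<open>Hermitian form of signature (2,1) on C^3:
  herm V W = V1 conj(W3) + V2 conj(W2) + V3 conj(W1).\<close>
definition herm :: "complex^3 \<Rightarrow> complex^3 \<Rightarrow> complex" where
  "herm V W = V$1 * cnj (W$3) + V$2 * cnj (W$2) + V$3 * cnj (W$1)"

text \<open>Points of the boundary at infinity are null complex lines; we represent
  a point by the set of its nonzero representatives, so subsets of the boundary
  are sets of nonzero null vectors closed under nonzero scaling.\<close>
definition null_vectors :: "(complex^3) set" where
  "null_vectors = {Z. Z \<noteq> 0 \<and> herm Z Z = 0}"

fun matpow :: "complex^3^3 \<Rightarrow> nat \<Rightarrow> complex^3^3" where
  "matpow A 0 = mat 1"
| "matpow A (Suc n) = A ** matpow A n"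

definition matzpow :: "complex^3^3 \<Rightarrow> int \<Rightarrow> complex^3^3" where
  "matzpow A k = (if 0 \<le> k then matpow A (nat k) else matpow (matrix_inv A) (nat (- k)))"

definition G1 :: "complex^3^3" where
  "G1 = vector [vector [1, 1, - (1 + \<i> * complex_of_real (sqrt 7)) / 2],
                vector [0, 1, -1],
                vector [0, 0, 1]]"

definition G3 :: "complex^3^3" where
  "G3 = vector [vector [1, 0, 0],
                vector [-1, 1, 0],
                vector [(-1 + \<i> * complex_of_real (sqrt 7)) / 2, 1, 1]]"

definition G2 :: "complex^3^3" where
  "G2 = G3 ** matrix_inv G1 ** matrix_inv G3 ** G1"

definition Qv :: "complex^3" where
  "Qv = vector [1, 0, 0]"

text \<open>Spinal sphere of G: boundary at infinity of the bisector equidistant from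
  Q and G Q.\<close>
definition spinal_sphere :: "complex^3^3 \<Rightarrow> (complex^3) set" where
  "spinal_sphere G = {Z \<in> null_vectors. cmod (herm Z Qv) = cmod (herm Z (G *v Qv))}"

definition gamma :: "nat \<Rightarrow> complex^3^3" where
  "gamma j = (if j = 1 then G2 else if j = 2 then matrix_inv G2
              else if j = 3 then G3 else matrix_inv G3)"

definition S :: "nat \<Rightarrow> (complex^3) set" where
  "S j = spinal_sphere (gamma j)"

definition act :: "complex^3^3 \<Rightarrow> (complex^3) set \<Rightarrow> (complex^3) set" where
  "act G A = (\<lambda>Z. G *v Z) ` A"

end

theory Submission imports Defs begin

(* Work in Siegel coordinates: a boundary point [Z] with Z$3 \<noteq> 0
   has horizontal coordinate Z$2/Z$3, and we call its real part the "shadow" of Z.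
   (1) A general estimate: if G Q = p is a null vector with p$3 \<noteq> 0, then every point of
       the spinal sphere of G has Z$3 \<noteq> 0 and its shadow lies in the strip
       (shadow Z - shadow p)^2 \<le> 2 / |p$3|.  This follows from the equation
       |<Z,Q>| = |<Z,p>| together with an identity valid for two null vectors.
   (2) G1 fixes Q and is a Heisenberg translation: every integer power G1^k moves the
       shadow of a point by exactly -k.
   (3) Computing gamma_j Q for j = 1..4 gives, for each spinal sphere S j, a strip with
       centre 3/2, 0, 1/4, -1/4 and half-width sqrt 2, sqrt 2, 2^(1/4), 2^(1/4).
   If S i meets G1^k S j, the strip of S i meets the strip of S j translated by -k, so
   |k + centre i - centre j| is at most the sum of the half-widths.  Bounding the
   half-widths by 17/12 and 123/100 and using that k is an integer yields each of the
   ten windows stated in the theorem. *)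

abbreviation sqrt7 :: complex where
  "sqrt7 \<equiv> complex_of_real (sqrt 7)"

lemma matrix_inv_cancel:
  assumes "invertible (A::'a::field^'n^'n)"
  shows "A ** matrix_inv A = mat 1 \<and> matrix_inv A ** A = mat 1"
  using assms unfolding invertible_def matrix_inv_def by (rule someI_ex)

lemma matrix_inv_apply:
  assumes "invertible (A::'a::field^'n^'n)" and "A *v y = x"
  shows "matrix_inv A *v x = y"
  using matrix_inv_cancel[OF assms(1)] assms(2)
  by (metis matrix_vector_mul_assoc matrix_vector_mul_lid)

lemma invertible_matrix_inv:
  assumes "invertible (A::'a::field^'n^'n)"
  shows "invertible (matrix_inv A)"
  using matrix_inv_cancel[OF assms] unfolding invertible_def by blast

lemma matrix_vector_mult_3:
  "(A::'a::semiring_1^3^3) *v x = vector [A$1$1*x$1 + A$1$2*x$2 + A$1$3*x$3,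
     A$2$1*x$1 + A$2$2*x$2 + A$2$3*x$3, A$3$1*x$1 + A$3$2*x$2 + A$3$3*x$3]"
  by (simp add: vec_eq_iff forall_3 matrix_vector_mult_def sum_3)

lemma vec3_eq_iff: "((x::'a^3) = y) \<longleftrightarrow> x$1 = y$1 \<and> x$2 = y$2 \<and> x$3 = y$3"
  by (simp add: vec_eq_iff forall_3)

lemma invertible_G1: "invertible G1"
  by (simp add: invertible_det_nz det_3 G1_def)

lemma invertible_G3: "invertible G3"
  by (simp add: invertible_det_nz det_3 G3_def)

lemma invertible_G2: "invertible G2"
  unfolding G2_def by (intro invertible_mult invertible_G1 invertible_G3 invertible_matrix_inv)

section \<open>Spinal spheres project into vertical strips\<close>

text \<open>The real part of the horizontal Siegel coordinate of a boundary point.\<close>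
definition shadow :: "complex^3 \<Rightarrow> real" where
  "shadow Z = Re (Z$2 / Z$3)"

lemma herm_Qv: "herm Z Qv = Z$3"
  by (simp add: herm_def Qv_def)

lemma null_cross_term:
  assumes "herm Z Z = 0" and "herm p p = 0"
  shows "cmod (Z$2 * p$3 - Z$3 * p$2) ^ 2 = - 2 * Re (cnj (Z$3) * p$3 * herm Z p)"
proof -
  define D where "D = Z$2 * p$3 - Z$3 * p$2"
  define X where "X = cnj (Z$3) * p$3 * herm Z p"
  have "X + cnj X + D * cnj D
        = (p$3 * cnj (p$3)) * herm Z Z + (Z$3 * cnj (Z$3)) * herm p p"
    unfolding X_def D_def herm_def by (simp add: algebra_simps)
  then have "D * cnj D = - (X + cnj X)"
    using assms by (simp add: add_eq_0_iff)
  then have "complex_of_real (cmod D ^ 2) = complex_of_real (- 2 * Re X)"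
    by (simp only: complex_norm_square complex_add_cnj) simp
  then show ?thesis
    unfolding D_def X_def using of_real_eq_iff by blast
qed

lemma spinal_sphere_finite:
  assumes Z: "Z \<in> spinal_sphere G" and p: "G *v Qv = p" and p3: "p$3 \<noteq> 0"
  shows "Z$3 \<noteq> 0"
proof
  assume Z3: "Z$3 = 0"
  from Z have "Z \<noteq> 0" "herm Z Z = 0" and eq: "cmod (Z$3) = cmod (herm Z p)"
    by (auto simp: spinal_sphere_def null_vectors_def herm_Qv p)
  from \<open>herm Z Z = 0\<close> Z3 have Z2: "Z$2 = 0"
    by (simp add: herm_def)
  from eq Z3 Z2 have "Z$1 * cnj (p$3) = 0"
    by (simp add: herm_def)
  with p3 Z2 Z3 have "Z = 0"
    by (simp add: vec3_eq_iff)
  with \<open>Z \<noteq> 0\<close> show False ..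
qed

lemma spinal_sphere_strip:
  assumes Z: "Z \<in> spinal_sphere G" and p: "G *v Qv = p"
    and p3: "p$3 \<noteq> 0" and p_null: "herm p p = 0"
  shows "(shadow Z - shadow p) ^ 2 \<le> 2 / cmod (p$3)"
proof -
  have Z3: "Z$3 \<noteq> 0" by (rule spinal_sphere_finite[OF Z p p3])
  from Z have Z_null: "herm Z Z = 0" and eq: "cmod (herm Z p) = cmod (Z$3)"
    by (auto simp: spinal_sphere_def null_vectors_def herm_Qv p)
  define D where "D = Z$2 * p$3 - Z$3 * p$2"
  have "cmod D ^ 2 = - 2 * Re (cnj (Z$3) * p$3 * herm Z p)"
    unfolding D_def by (rule null_cross_term[OF Z_null p_null])
  also have "\<dots> \<le> 2 * cmod (cnj (Z$3) * p$3 * herm Z p)"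
    using abs_Re_le_cmod[of "cnj (Z$3) * p$3 * herm Z p"] by linarith
  also have "\<dots> = 2 * (cmod (Z$3) ^ 2 * cmod (p$3))"
    using eq by (simp add: norm_mult power2_eq_square)
  finally have D_bound: "cmod D ^ 2 \<le> 2 * (cmod (Z$3) ^ 2 * cmod (p$3))" .
  have "shadow Z - shadow p = Re (D / (Z$3 * p$3))"
    using Z3 p3 by (simp add: shadow_def D_def field_simps flip: minus_complex.sel(1))
  then have "(shadow Z - shadow p) ^ 2 \<le> cmod (D / (Z$3 * p$3)) ^ 2"
    by (metis abs_Re_le_cmod abs_ge_zero power2_abs power_mono)
  also have "\<dots> = cmod D ^ 2 / (cmod (Z$3) ^ 2 * cmod (p$3) ^ 2)"
    by (simp add: norm_divide norm_mult power_divide power_mult_distrib)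
  also have "\<dots> \<le> 2 * (cmod (Z$3) ^ 2 * cmod (p$3)) / (cmod (Z$3) ^ 2 * cmod (p$3) ^ 2)"
    by (rule divide_right_mono[OF D_bound]) simp
  also have "\<dots> = 2 / cmod (p$3)"
    using Z3 p3 by (simp add: field_simps power2_eq_square)
  finally show ?thesis .
qed

section \<open>Powers of a Heisenberg translation\<close>

lemma matpow_translation:
  assumes A: "\<And>V. (A *v V)$3 = V$3 \<and> (A *v V)$2 = V$2 + t * V$3"
  shows "(matpow A n *v W)$3 = W$3 \<and> (matpow A n *v W)$2 = W$2 + of_nat n * t * W$3"
proof (induction n)
  case 0
  then show ?case by simp
next
  case (Suc n)
  have "matpow A (Suc n) *v W = A *v (matpow A n *v W)"
    by (simp add: matrix_vector_mul_assoc)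
  with Suc show ?case
    by (simp only: A) (simp add: algebra_simps)
qed

lemma matzpow_translation:
  assumes "invertible A" and A: "\<And>V. (A *v V)$3 = V$3 \<and> (A *v V)$2 = V$2 + t * V$3"
  shows "(matzpow A k *v W)$3 = W$3 \<and> (matzpow A k *v W)$2 = W$2 + of_int k * t * W$3"
proof (cases "0 \<le> k")
  case True
  then show ?thesis
    using matpow_translation[OF A, of "nat k" W] by (simp add: matzpow_def)
next
  case False
  have A_inv: "(matrix_inv A *v V)$3 = V$3 \<and> (matrix_inv A *v V)$2 = V$2 + (- t) * V$3" for V
  proof -
    have "A *v (matrix_inv A *v V) = V"
      using matrix_inv_cancel[OF assms(1)]
      by (metis matrix_vector_mul_assoc matrix_vector_mul_lid)
    then show ?thesis
      using A[of "matrix_inv A *v V"] by auto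
  qed
  have "of_nat (nat (- k)) = (- of_int k :: complex)"
    using False by simp
  then show ?thesis
    using False matpow_translation[OF A_inv, of "nat (- k)" W] by (simp add: matzpow_def)
qed

lemma G1_translation: "(G1 *v V)$3 = V$3 \<and> (G1 *v V)$2 = V$2 + (- 1) * V$3"
  by (simp add: matrix_vector_mult_3 G1_def)

lemma shadow_G1_power:
  assumes "W$3 \<noteq> 0"
  shows "(matzpow G1 k *v W)$3 \<noteq> 0 \<and> shadow (matzpow G1 k *v W) = shadow W - of_int k"
proof -
  have "(matzpow G1 k *v W)$3 = W$3 \<and> (matzpow G1 k *v W)$2 = W$2 - of_int k * W$3"
    using matzpow_translation[OF invertible_G1 G1_translation, of k W] by simp
  then show ?thesis
    using assms by (simp add: shadow_def diff_divide_distrib)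
qed

lemma G1_Qv: "G1 *v Qv = Qv"
  by (simp add: matrix_vector_mult_3 G1_def Qv_def vec3_eq_iff)

lemma G3_Qv: "G3 *v Qv = vector [1, -1, (-1 + \<i> * sqrt7)/2]"
  by (simp add: matrix_vector_mult_3 G3_def Qv_def vec3_eq_iff)

lemma G3_inv_Qv: "matrix_inv G3 *v Qv = vector [1, 1, (-1 - \<i> * sqrt7)/2]"
  by (rule matrix_inv_apply[OF invertible_G3])
     (simp add: matrix_vector_mult_3 G3_def Qv_def vec3_eq_iff complex_eq_iff)

lemma G2_Qv: "G2 *v Qv = vector [2, (-3 - \<i> * sqrt7)/2, -1]"
proof -
  have "G1 *v vector [2, (1 - \<i> * sqrt7)/2, (-1 - \<i> * sqrt7)/2]
        = vector [1, 1, (-1 - \<i> * sqrt7)/2]"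
    by (simp add: matrix_vector_mult_3 G1_def vec3_eq_iff complex_eq_iff algebra_simps)
  then have G1_inv: "matrix_inv G1 *v vector [1, 1, (-1 - \<i> * sqrt7)/2]
                     = vector [2, (1 - \<i> * sqrt7)/2, (-1 - \<i> * sqrt7)/2]"
    by (rule matrix_inv_apply[OF invertible_G1])
  have "G2 *v Qv = G3 *v (matrix_inv G1 *v (matrix_inv G3 *v (G1 *v Qv)))"
    unfolding G2_def by (simp only: matrix_vector_mul_assoc matrix_mul_assoc)
  also have "\<dots> = G3 *v vector [2, (1 - \<i> * sqrt7)/2, (-1 - \<i> * sqrt7)/2]"
    by (simp only: G1_Qv G3_inv_Qv G1_inv)
  also have "\<dots> = vector [2, (-3 - \<i> * sqrt7)/2, -1]"
    by (simp add: matrix_vector_mult_3 G3_def vec3_eq_iff complex_eq_iff)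
  finally show ?thesis .
qed

lemma G2_inv_Qv: "matrix_inv G2 *v Qv = vector [0, 0, -1]"
proof (rule matrix_inv_apply[OF invertible_G2])
  define x :: "complex^3" where "x = vector [(1 + \<i> * sqrt7)/2, 1, -1]"
  define y :: "complex^3"
    where "y = vector [(1 + \<i> * sqrt7)/2, (3 + \<i> * sqrt7)/2, (-1 - \<i> * sqrt7)/2]"
  have x: "G1 *v vector [0, 0, -1] = x"
    by (simp add: matrix_vector_mult_3 G1_def x_def vec3_eq_iff complex_eq_iff)
  have y: "matrix_inv G3 *v x = y"
    by (rule matrix_inv_apply[OF invertible_G3])
       (simp add: matrix_vector_mult_3 G3_def x_def y_def vec3_eq_iff complex_eq_iff)
  have z: "matrix_inv G1 *v y = vector [1, 1, (-1 - \<i> * sqrt7)/2]"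
    by (rule matrix_inv_apply[OF invertible_G1])
       (simp add: matrix_vector_mult_3 G1_def y_def vec3_eq_iff complex_eq_iff)
  have "G2 *v vector [0, 0, -1]
      = G3 *v (matrix_inv G1 *v (matrix_inv G3 *v (G1 *v vector [0, 0, -1])))"
    unfolding G2_def by (simp only: matrix_vector_mul_assoc matrix_mul_assoc)
  also have "\<dots> = G3 *v vector [1, 1, (-1 - \<i> * sqrt7)/2]"
    by (simp only: x y z)
  also have "\<dots> = Qv"
    by (simp add: Qv_def matrix_vector_mult_3 G3_def vec3_eq_iff complex_eq_iff)
  finally show "G2 *v vector [0, 0, -1] = Qv" .
qed

lemma gamma_Qv:
  "gamma 1 *v Qv = vector [2, (-3 - \<i> * sqrt7)/2, -1]"
  "gamma 2 *v Qv = vector [0, 0, -1]"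
  "gamma 3 *v Qv = vector [1, -1, (-1 + \<i> * sqrt7)/2]"
  "gamma 4 *v Qv = vector [1, 1, (-1 - \<i> * sqrt7)/2]"
  by (simp_all add: gamma_def G2_Qv G2_inv_Qv G3_Qv G3_inv_Qv)

definition strip_centre :: "nat \<Rightarrow> real" where
  "strip_centre j = (if j = 1 then 3/2 else if j = 2 then 0 else if j = 3 then 1/4 else -1/4)"

definition strip_width :: "nat \<Rightarrow> real" where
  "strip_width j = (if j \<le> 2 then sqrt 2 else sqrt (sqrt 2))"

lemma strip_from_image:
  assumes "Z \<in> S j" and "gamma j *v Qv = p" and "p$3 \<noteq> 0" and "herm p p = 0"
    and "shadow p = c" and "2 / cmod (p$3) = w ^ 2" and "0 \<le> w"
  shows "Z$3 \<noteq> 0 \<and> \<bar>shadow Z - c\<bar> \<le> w"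
  using spinal_sphere_finite[of Z "gamma j" p] spinal_sphere_strip[of Z "gamma j" p] assms
  by (simp add: S_def power2_le_iff_abs_le)

lemma sphere_in_strip:
  assumes "j \<in> {1..4}" and "Z \<in> S j"
  shows "Z$3 \<noteq> 0 \<and> \<bar>shadow Z - strip_centre j\<bar> \<le> strip_width j"
proof -
  have norm_p3: "cmod ((-1 + \<i> * sqrt7)/2) = sqrt 2" "cmod ((-1 - \<i> * sqrt7)/2) = sqrt 2"
    by (simp_all add: cmod_def power_divide)
  from assms(1) consider "j = 1" | "j = 2" | "j = 3" | "j = 4" by force
  then show ?thesis
  proof cases
    case 1
    show ?thesis
      by (rule strip_from_image[OF assms(2)[unfolded 1] gamma_Qv(1)])
         (simp_all add: 1 herm_def shadow_def strip_centre_def strip_width_def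
                        complex_eq_iff power_divide)
  next
    case 2
    show ?thesis
      by (rule strip_from_image[OF assms(2)[unfolded 2] gamma_Qv(2)])
         (simp_all add: 2 herm_def shadow_def strip_centre_def strip_width_def)
  next
    case 3
    have width: "2 / cmod ((gamma 3 *v Qv)$3) = strip_width 3 ^ 2"
      unfolding gamma_Qv(3) vector_3 norm_p3 by (simp add: strip_width_def real_div_sqrt)
    show ?thesis
      unfolding 3 by (rule strip_from_image[OF assms(2)[unfolded 3] refl _ _ _ width])
         (simp_all add: 3 gamma_Qv herm_def shadow_def strip_centre_def strip_width_def
                        complex_eq_iff power_divide Re_divide)
  next
    case 4
    have width: "2 / cmod ((gamma 4 *v Qv)$3) = strip_width 4 ^ 2"
      unfolding gamma_Qv(4) vector_3 norm_p3 by (simp add: strip_width_def real_div_sqrt)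
    show ?thesis
      unfolding 4 by (rule strip_from_image[OF assms(2)[unfolded 4] refl _ _ _ width])
         (simp_all add: 4 gamma_Qv herm_def shadow_def strip_centre_def strip_width_def
                        complex_eq_iff power_divide Re_divide)
  qed
qed

section \<open>Overlaps of translated spheres\<close>

lemma overlap_bound:
  assumes "i \<in> {1..4}" and "j \<in> {1..4}" and "S i \<inter> act (matzpow G1 k) (S j) \<noteq> {}"
  shows "\<bar>of_int k + (strip_centre i - strip_centre j)\<bar> \<le> strip_width i + strip_width j"
proof -
  obtain W where W: "W \<in> S j" "matzpow G1 k *v W \<in> S i"
    using assms(3) unfolding act_def by blast
  have W_strip: "W$3 \<noteq> 0" "\<bar>shadow W - strip_centre j\<bar> \<le> strip_width j"
    using sphere_in_strip[OF assms(2) W(1)] by auto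
  have "\<bar>shadow (matzpow G1 k *v W) - strip_centre i\<bar> \<le> strip_width i"
    using sphere_in_strip[OF assms(1) W(2)] by simp
  moreover have "shadow (matzpow G1 k *v W) = shadow W - of_int k"
    using shadow_G1_power[OF W_strip(1)] by simp
  ultimately show ?thesis
    using W_strip(2) by linarith
qed

text \<open>Rational upper bounds for the half-widths, precise enough for all ten cases.\<close>
definition width_bound :: "nat \<Rightarrow> real" where
  "width_bound j = (if j \<le> 2 then 17/12 else 123/100)"

lemma strip_width_less: "strip_width j < width_bound j"
proof -
  have sqrt2: "sqrt 2 < 17/12"
    by (rule real_less_lsqrt) (simp_all add: power2_eq_square)
  moreover have "sqrt (sqrt 2) < 123/100"
    by (rule real_less_lsqrt) (use sqrt2 in \<open>simp_all add: power2_eq_square\<close>)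
  ultimately show ?thesis
    by (simp add: strip_width_def width_bound_def)
qed

lemma integer_window:
  assumes "\<bar>real_of_int k + d\<bar> \<le> R" and "real_of_int l - 1 < - R - d" and "R - d < real_of_int h + 1"
  shows "l \<le> k \<and> k \<le> h"
proof -
  have "real_of_int (l - 1) < real_of_int k" and "real_of_int k < real_of_int (h + 1)"
    using assms by auto
  then show ?thesis
    by linarith
qed

theorem proposition5p2:
  fixes k :: int
  shows "(S 1 \<inter> act (matzpow G1 k) (S 1) \<noteq> {} \<longrightarrow> -2 \<le> k \<and> k \<le> 2)
       \<and> (S 1 \<inter> act (matzpow G1 k) (S 2) \<noteq> {} \<longrightarrow> -4 \<le> k \<and> k \<le> 1)
       \<and> (S 1 \<inter> act (matzpow G1 k) (S 3) \<noteq> {} \<longrightarrow> -3 \<le> k \<and> k \<le> 1)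
       \<and> (S 1 \<inter> act (matzpow G1 k) (S 4) \<noteq> {} \<longrightarrow> -4 \<le> k \<and> k \<le> 0)
       \<and> (S 2 \<inter> act (matzpow G1 k) (S 2) \<noteq> {} \<longrightarrow> -2 \<le> k \<and> k \<le> 2)
       \<and> (S 2 \<inter> act (matzpow G1 k) (S 3) \<noteq> {} \<longrightarrow> -2 \<le> k \<and> k \<le> 2)
       \<and> (S 2 \<inter> act (matzpow G1 k) (S 4) \<noteq> {} \<longrightarrow> -2 \<le> k \<and> k \<le> 2)
       \<and> (S 3 \<inter> act (matzpow G1 k) (S 3) \<noteq> {} \<longrightarrow> -2 \<le> k \<and> k \<le> 2)
       \<and> (S 3 \<inter> act (matzpow G1 k) (S 4) \<noteq> {} \<longrightarrow> -2 \<le> k \<and> k \<le> 1)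
       \<and> (S 4 \<inter> act (matzpow G1 k) (S 4) \<noteq> {} \<longrightarrow> -2 \<le> k \<and> k \<le> 2)"
proof -
  have window: "S i \<inter> act (matzpow G1 k) (S j) \<noteq> {} \<longrightarrow> l \<le> k \<and> k \<le> h"
    if "i \<in> {1..4}" and "j \<in> {1..4}"
      and "real_of_int l - 1 < - (width_bound i + width_bound j) - (strip_centre i - strip_centre j)"
      and "width_bound i + width_bound j - (strip_centre i - strip_centre j) < real_of_int h + 1"
    for i j l h
  proof
    assume "S i \<inter> act (matzpow G1 k) (S j) \<noteq> {}"
    then have "\<bar>of_int k + (strip_centre i - strip_centre j)\<bar> \<le> width_bound i + width_bound j"
      using overlap_bound[OF that(1,2)] strip_width_less[of i] strip_width_less[of j] by fastforce
    then show "l \<le> k \<and> k \<le> h"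
      using integer_window that(3,4) by blast
  qed
  show ?thesis
    by (intro conjI window) (simp_all add: strip_centre_def width_bound_def)
qed

end
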